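(* Let $L$ be an oriented, ordered, compatible virtual link diagram with components $L_1,\dots,L_n$, and let $C$ be an affine bilabeling of $L$. Then the multi-variable affine index polynomial $$p_{(L,C)}(t_1,\dots,t_n)=\sum_{c}\operatorname{sgn}(c)\bigl(t_{o(c)}^{W(c)}-1\bigr)$$ is an invariant of the pair $(L,C)$: it is unchanged under classical and virtual Reidemeister moves, where the bilabeling is carried along, i.e. labels on arcs outside the local disc of the move are unchanged. Moreover, this invariant generalizes the earlier affine index polynomials. (i) For every $i$, collapse the starting bilabel of $L_i$ to the single label $A_i=a^{(i)}_1+a^{(i)}_2$ and form Kauffman's compatible-link affine index polynomial $P_L(t)$ from it. Then substituting $t_1=\dots=t_n=t$ gives $p_{(L,C)}(t,\dots,t)=P_L(t)$. (ii) If $n=1$, so that $L=K$ is a virtual knot, then $p_{(K,C)}(t)$ equals the Affine Index Polynomial $P_K(t)$.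
   Context: **Diagrams.** A virtual link diagram is an oriented planar diagram of ordered closed curves $L_1,\dots,L_n$, called components. Its crossings are either classical (with over/under information) or virtual. Diagrams are considered up to the classical and virtual Reidemeister moves. **Crossing conventions.** Draw a classical crossing with both strands oriented upward. - The strand running from bottom-left to top-right has index change $-1$; the strand running from bottom-right to top-left has index change $+1$. - The crossing is positive ($\operatorname{sgn}=+1$) if the overstrand is the bottom-left-to-top-right strand, and negative otherwise. - A classical crossing is a self-crossing if both strands lie on the same component, and external otherwise. - For each component $L_i$, its weight $n_i$ is the sum of the index changes of $L_i$ over all its passages through external classical crossings (its algebraic intersection number with the other components). - $L$ is compatible if $n_i=0$ for all $i$. **Affine bilabeling $C$.** - For each component $L_i$, choose a starting point on it and give it a bilabel $(a^{(i)}_1,a^{(i)}_2)$ of formal integer variables, distinct for different components. - Travel along $L_i$ in its orientation and carry the bilabel along the arcs. It is unchanged at virtual crossings. - On passing through a classical crossing with index change $\varepsilon$, the first entry changes by $\varepsilon$ if the crossing is a self-crossing, and the second entry changes by $\varepsilon$ if it is external. - For compatible $L$, the labels close up consistently. **Crossing weight $W(c)$.** For a bilabel $(x,y)$, put $|(x,y)|=x+y$. Draw $c$ with both strands upward. - If $c$ is positive, $W(c)=|\text{bottom-left label}|-|\text{top-left label}|$. - If $c$ is negative, $W(c)=|\text{bottom-right label}|-|\text{top-right label}|$. **The polynomial.** $o(c)$ denotes the index of the component containing the overstrand of $c$. The sum defining $p_{(L,C)}$ runs over all classical crossings; exponents are integer linear combinations of the variables. Equivalently, $p_{(L,C)}=\sum_c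 \operatorname{sgn}(c)\,t_{o(c)}^{W(c)}-\mathrm{writhe}(L)$. **Kauffman's affine labeling and $P_L(t)$.** - Give each component a single starting label and propagate it by adding the index change at every classical crossing, both self and external. - Weights: for positive $c$, $W(c)=(\text{bottom-left})-(\text{top-left})$; for negative $c$, $W(c)=(\text{bottom-right})-(\text{top-right})$. - $P_L(t)=\sum_c\operatorname{sgn}(c)(t^{W(c)}-1)$. - For a virtual knot $K$, this polynomial is independent of the starting label and is the Affine Index Polynomial $P_K(t)$. *)

theory Defs
  imports Main "HOL-Library.Function_Algebras" "HOL-Library.Product_Plus"
begin

text \<open>Virtual link diagrams are modelled by their Gauss diagrams (Gauss codes):
virtual crossings are not recorded, so virtual Reidemeister moves act trivially.
Component i (i < length (comps D)) is the list of its passages through classical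
crossings, read along the orientation starting at the chosen base point.
A passage is a pair (crossing name, True if it is the overstrand).\<close>

record gd =
  sg    :: "nat \<Rightarrow> int"
  comps :: "(nat \<times> bool) list list"

definition crossings :: "gd \<Rightarrow> nat set" where
  "crossings D = fst ` set (concat (comps D))"

definition wf_gd :: "gd \<Rightarrow> bool" where
  "wf_gd D \<longleftrightarrow> (\<forall>c \<in> crossings D.
      count_list (concat (comps D)) (c, True) = 1 \<and>
      count_list (concat (comps D)) (c, False) = 1 \<and>
      sg D c \<in> {1, -1})"

definition pos :: "gd \<Rightarrow> nat \<times> bool \<Rightarrow> nat \<times> nat" where
  "pos D p = (SOME ij. fst ij < length (comps D) \<and> snd ij < length (comps D ! fst ij)
                       \<and> comps D ! fst ij ! snd ij = p)"

definition comp_of :: "gd \<Rightarrow> nat \<times> bool \<Rightarrow> nat" where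
  "comp_of D p = fst (pos D p)"

definition is_self :: "gd \<Rightarrow> nat \<Rightarrow> bool" where
  "is_self D c \<longleftrightarrow> comp_of D (c, True) = comp_of D (c, False)"

text \<open>Index change of a passage: with both strands upward, the bottom-left to top-right
strand has change -1 and the other +1; at a positive crossing the over strand is the
bottom-left to top-right one.\<close>
definition ichg :: "gd \<Rightarrow> nat \<times> bool \<Rightarrow> int" where
  "ichg D p = (if snd p then - sg D (fst p) else sg D (fst p))"

definition comp_weight :: "gd \<Rightarrow> nat \<Rightarrow> int" where
  "comp_weight D i = sum_list (map (\<lambda>p. if is_self D (fst p) then 0 else ichg D p) (comps D ! i))"

definition compatible :: "gd \<Rightarrow> bool" where
  "compatible D \<longleftrightarrow> (\<forall>i < length (comps D). comp_weight D i = 0)"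

text \<open>Affine integer expressions in formal variables of type 'v:
(coefficient function, constant).\<close>
type_synonym 'v aff = "('v \<Rightarrow> int) \<times> int"

definition avar :: "'v \<Rightarrow> 'v aff" where
  "avar v = ((\<lambda>w. if w = v then 1 else 0), 0)"

definition aconst :: "int \<Rightarrow> 'v aff" where
  "aconst k = (0, k)"

text \<open>Affine bilabeling: the starting bilabel of component i is (a(i,1), a(i,2)).\<close>
definition bilabel :: "gd \<Rightarrow> nat \<Rightarrow> nat \<Rightarrow> (nat \<times> nat) aff \<times> (nat \<times> nat) aff" where
  "bilabel D i j =
     (avar (i, 1) + aconst (sum_list (map (\<lambda>p. if is_self D (fst p) then ichg D p else 0)
                                         (take j (comps D ! i)))),
      avar (i, 2) + aconst (sum_list (map (\<lambda>p. if is_self D (fst p) then 0 else ichg D p)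
                                         (take j (comps D ! i)))))"

definition babs :: "'v aff \<times> 'v aff \<Rightarrow> 'v aff" where
  "babs l = fst l + snd l"

text \<open>W(c): |incoming label of the overstrand| - |outgoing label of the understrand|
(= bottom-left minus top-left for positive, bottom-right minus top-right for negative).\<close>
definition cweight :: "gd \<Rightarrow> nat \<Rightarrow> (nat \<times> nat) aff" where
  "cweight D c = (let (i, j) = pos D (c, True); (i', j') = pos D (c, False)
                  in babs (bilabel D i j) - babs (bilabel D i' (Suc j')))"

definition over_comp :: "gd \<Rightarrow> nat \<Rightarrow> nat" where
  "over_comp D c = comp_of D (c, True)"

text \<open>Monomials t_k^e of the multivariable polynomial; all t_k^0 are identified with 1 (None).\<close>
type_synonym 'v mono = "(nat \<times> 'v aff) option"

definition mono :: "nat \<Rightarrow> 'v aff \<Rightarrow> 'v mono" where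
  "mono k e = (if e = 0 then None else Some (k, e))"

definition mvaip :: "gd \<Rightarrow> (nat \<times> nat) mono \<Rightarrow> int" where
  "mvaip D = (\<lambda>m. \<Sum>c \<in> crossings D. sg D c *
       ((if m = mono (over_comp D c) (cweight D c) then 1 else 0) - (if m = None then 1 else 0)))"

text \<open>Substitution t_1 = ... = t_n = t: coefficient of t^e.\<close>
definition mono_exp :: "'v mono \<Rightarrow> 'v aff" where
  "mono_exp m = (case m of None \<Rightarrow> 0 | Some (k, e) \<Rightarrow> e)"

definition specialize :: "('v mono \<Rightarrow> int) \<Rightarrow> 'v aff \<Rightarrow> int" where
  "specialize P e = (\<Sum>m \<in> {m. P m \<noteq> 0 \<and> mono_exp m = e}. P m)"

text \<open>Kauffman's affine labeling with starting labels st i, and P_L(t) (coefficient of t^e).\<close>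
definition klabel :: "gd \<Rightarrow> (nat \<Rightarrow> 'v aff) \<Rightarrow> nat \<Rightarrow> nat \<Rightarrow> 'v aff" where
  "klabel D st i j = st i + aconst (sum_list (map (ichg D) (take j (comps D ! i))))"

definition kweight :: "gd \<Rightarrow> (nat \<Rightarrow> 'v aff) \<Rightarrow> nat \<Rightarrow> 'v aff" where
  "kweight D st c = (let (i, j) = pos D (c, True); (i', j') = pos D (c, False)
                     in klabel D st i j - klabel D st i' (Suc j'))"

definition kauffman_P :: "gd \<Rightarrow> (nat \<Rightarrow> 'v aff) \<Rightarrow> 'v aff \<Rightarrow> int" where
  "kauffman_P D st = (\<lambda>e. \<Sum>c \<in> crossings D. sg D c *
       ((if e = kweight D st c then 1 else 0) - (if e = 0 then 1 else 0)))"

text \<open>Reidemeister moves on Gauss diagrams, performed away from the base points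
(so the bilabeling is carried along).\<close>
definition delete_crossings :: "nat set \<Rightarrow> gd \<Rightarrow> gd" where
  "delete_crossings S D = D\<lparr>comps := map (filter (\<lambda>p. fst p \<notin> S)) (comps D)\<rparr>"

definition adjacent :: "gd \<Rightarrow> nat \<times> bool \<Rightarrow> nat \<times> bool \<Rightarrow> bool" where
  "adjacent D p q \<longleftrightarrow> (\<exists>i u v. i < length (comps D) \<and> comps D ! i = u @ [p, q] @ v)"

definition R1_remove :: "gd \<Rightarrow> gd \<Rightarrow> bool" where
  "R1_remove D D' \<longleftrightarrow> wf_gd D \<and>
     (\<exists>c b. adjacent D (c, b) (c, \<not> b) \<and> D' = delete_crossings {c} D)"

definition R2_remove :: "gd \<Rightarrow> gd \<Rightarrow> bool" where
  "R2_remove D D' \<longleftrightarrow> wf_gd D \<and>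
     (\<exists>c d. c \<noteq> d \<and> sg D c = - sg D d \<and> adjacent D (c, True) (d, True) \<and>
        (adjacent D (c, False) (d, False) \<or> adjacent D (d, False) (c, False)) \<and>
        D' = delete_crossings {c, d} D)"

fun swap_adj :: "'a \<Rightarrow> 'a \<Rightarrow> 'a list \<Rightarrow> 'a list" where
  "swap_adj p q (x # y # zs) = (if x = p \<and> y = q then q # p # zs else x # swap_adj p q (y # zs))"
| "swap_adj p q xs = xs"

definition ord_sign :: "gd \<Rightarrow> nat \<times> bool \<Rightarrow> nat \<times> bool \<Rightarrow> int" where
  "ord_sign D p q = (if adjacent D p q then 1 else -1)"

text \<open>R3: crossings x (top over middle), y (top over bottom), z (middle over bottom);
on each strand the two passages are adjacent and get swapped.  The realizability
condition: there is s = +-1 with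
 [x before y on top] = s sgn z, [z before x on middle] = -s sgn y,
 [y before z on bottom] = s sgn x.\<close>
definition R3 :: "gd \<Rightarrow> gd \<Rightarrow> bool" where
  "R3 D D' \<longleftrightarrow> wf_gd D \<and>
     (\<exists>x y z. distinct [x, y, z] \<and>
        (adjacent D (x, True) (y, True) \<or> adjacent D (y, True) (x, True)) \<and>
        (adjacent D (z, True) (x, False) \<or> adjacent D (x, False) (z, True)) \<and>
        (adjacent D (y, False) (z, False) \<or> adjacent D (z, False) (y, False)) \<and>
        (\<exists>s \<in> {1, -1::int}.
           ord_sign D (x, True) (y, True) = s * sg D z \<and>
           ord_sign D (z, True) (x, False) = - s * sg D y \<and>
           ord_sign D (y, False) (z, False) = s * sg D x) \<and>
        D' = D\<lparr>comps := map (\<lambda>l.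
               let l1 = (if adjacent D (x, True) (y, True) then swap_adj (x, True) (y, True) l
                         else swap_adj (y, True) (x, True) l);
                   l2 = (if adjacent D (z, True) (x, False) then swap_adj (z, True) (x, False) l1
                         else swap_adj (x, False) (z, True) l1)
               in (if adjacent D (y, False) (z, False) then swap_adj (y, False) (z, False) l2
                   else swap_adj (z, False) (y, False) l2)) (comps D)\<rparr>)"

definition reid_move :: "gd \<Rightarrow> gd \<Rightarrow> bool" where
  "reid_move D D' \<longleftrightarrow> R1_remove D D' \<or> R1_remove D' D \<or> R2_remove D D' \<or> R2_remove D' D
                      \<or> R3 D D' \<or> R3 D' D"

end

theory Submission
  imports Defs "HOL-Library.Multiset"
begin

text \<open>Every label is a starting label plus a prefix sum of index changes along the Gauss code, so
the norm of the bilabel is Kauffman's label with starting label A_i = a_1 + a_2, and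
W(c) = A_o(c) - A_u(c) + k(c), where the integer k(c) (weight_offset below) depends only on the
prefix sums at the two passages of c.  This gives the specialization to P_L at once, and for a knot the A's cancel.

An R1 kink has its two passages adjacent on one
component, so W = 0 and it contributes nothing; the two crossings of an R2 bigon have equal
monomials and opposite signs; and deleting an adjacent pair of passages whose index changes sum
to zero leaves all other prefix sums unchanged.  An R3 move swaps three disjoint adjacent pairs of
passages, which shifts prefix sums only at those six passages, and the realizability condition on
the signs makes the shifts at the over- and the under-passage of each crossing agree, so k is
unchanged.\<close>

section \<open>Positions and prefix sums in a list of lists\<close>

text \<open>Only meaningful for p in set (concat Ls); unique when concat Ls is distinct.\<close>

definition position :: "'a list list \<Rightarrow> 'a \<Rightarrow> nat \<times> nat" where
  "position Ls p = (SOME ij. fst ij < length Ls \<and> snd ij < length (Ls ! fst ij)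
                            \<and> Ls ! fst ij ! snd ij = p)"

definition comp_index :: "'a list list \<Rightarrow> 'a \<Rightarrow> nat" where
  "comp_index Ls p = fst (position Ls p)"

definition prefix_sum :: "('a \<Rightarrow> int) \<Rightarrow> 'a list list \<Rightarrow> 'a \<Rightarrow> int" where
  "prefix_sum f Ls p = sum_list (map f (take (snd (position Ls p)) (Ls ! comp_index Ls p)))"

definition adjacent_in :: "'a list list \<Rightarrow> 'a \<Rightarrow> 'a \<Rightarrow> bool" where
  "adjacent_in Ls p q \<longleftrightarrow> (\<exists>i u v. i < length Ls \<and> Ls ! i = u @ [p, q] @ v)"

lemma in_set_concat_conv_nth: "p \<in> set (concat Ls) \<longleftrightarrow> (\<exists>k < length Ls. p \<in> set (Ls ! k))"
  by (metis UN_iff in_set_conv_nth set_concat)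

lemma position_spec:
  assumes "p \<in> set (concat Ls)"
  shows "comp_index Ls p < length Ls" "snd (position Ls p) < length (Ls ! comp_index Ls p)"
    "Ls ! comp_index Ls p ! snd (position Ls p) = p"
proof -
  obtain i j where "i < length Ls" "j < length (Ls ! i)" "Ls ! i ! j = p"
    using assms unfolding in_set_concat_conv_nth by (auto simp: in_set_conv_nth)
  then have "\<exists>ij. fst ij < length Ls \<and> snd ij < length (Ls ! fst ij) \<and> Ls ! fst ij ! snd ij = p"
    by force
  from someI_ex[OF this] show "comp_index Ls p < length Ls"
    "snd (position Ls p) < length (Ls ! comp_index Ls p)"
    "Ls ! comp_index Ls p ! snd (position Ls p) = p"
    unfolding comp_index_def position_def by blast+
qed

lemma distinct_concat_nth:
  assumes "distinct (concat Ls)" "i < length Ls"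
  shows "distinct (Ls ! i)"
  using assms by (simp add: distinct_concat_iff)

lemma distinct_concat_nth_unique:
  "distinct (concat Ls) \<Longrightarrow> i < length Ls \<Longrightarrow> k < length Ls \<Longrightarrow> x \<in> set (Ls ! i)
   \<Longrightarrow> x \<in> set (Ls ! k) \<Longrightarrow> i = k"
proof (induction Ls arbitrary: i k)
  case (Cons l Ls)
  then show ?case
    by (cases i; cases k) (auto simp: nth_Cons dest!: nth_mem)
qed simp

lemma position_eq:
  assumes dist: "distinct (concat Ls)" and i: "i < length Ls" "Ls ! i = u @ p # v"
  shows "position Ls p = (i, length u)"
  unfolding position_def
proof (rule some_equality)
  fix ij assume ij: "fst ij < length Ls \<and> snd ij < length (Ls ! fst ij) \<and> Ls ! fst ij ! snd ij = p"
  then have fst: "fst ij = i"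
    using distinct_concat_nth_unique[OF dist _ i(1), of "fst ij" p] i(2) by (auto dest: nth_mem)
  have "Ls ! i ! snd ij = Ls ! i ! length u" "snd ij < length (Ls ! i)" "length u < length (Ls ! i)"
    using ij i(2) fst by simp_all
  then have "snd ij = length u"
    using nth_eq_iff_index_eq[OF distinct_concat_nth[OF dist i(1)]] by blast
  with fst show "ij = (i, length u)" by (simp add: prod_eq_iff)
qed (use i in simp)

lemma prefix_sum_at:
  assumes "distinct (concat Ls)" "i < length Ls" "Ls ! i = u @ p # v"
  shows "comp_index Ls p = i" "prefix_sum f Ls p = sum_list (map f u)"
  using position_eq[OF assms] assms(3) by (simp_all add: comp_index_def prefix_sum_def)

lemma adjacent_in_set:
  assumes "adjacent_in Ls p q"
  shows "p \<in> set (concat Ls)" "q \<in> set (concat Ls)"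
  using assms unfolding adjacent_in_def in_set_concat_conv_nth by force+

lemma adjacent_in_prefix_sum:
  assumes dist: "distinct (concat Ls)" and adj: "adjacent_in Ls p q"
  shows "comp_index Ls q = comp_index Ls p" "prefix_sum f Ls q = prefix_sum f Ls p + f p"
proof -
  obtain i u v where i: "i < length Ls" "Ls ! i = u @ [p, q] @ v"
    using adj unfolding adjacent_in_def by blast
  then have "Ls ! i = u @ p # (q # v)" "Ls ! i = (u @ [p]) @ q # v" by simp_all
  from prefix_sum_at[OF dist i(1) this(1)] prefix_sum_at[OF dist i(1) this(2)]
  show "comp_index Ls q = comp_index Ls p" "prefix_sum f Ls q = prefix_sum f Ls p + f p" by simp_all
qed

lemma prefix_sum_replace_block:
  assumes dist: "distinct (concat Ls)" "distinct (concat Ls')"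
    and i: "i < length Ls" "Ls ! i = u @ w @ v" and Ls': "Ls' = Ls[i := u @ w' @ v]"
    and sum: "sum_list (map f w') = sum_list (map f w)"
    and p: "p \<in> set (concat Ls')" "p \<notin> set w'"
  shows "comp_index Ls' p = comp_index Ls p \<and> prefix_sum f Ls' p = prefix_sum f Ls p"
proof -
  have i': "i < length Ls'" "Ls' ! i = u @ w' @ v" using i Ls' by simp_all
  obtain k where k: "k < length Ls" "p \<in> set (Ls' ! k)"
    using p(1) Ls' unfolding in_set_concat_conv_nth by auto
  consider "k \<noteq> i" | "p \<in> set u" | "p \<in> set v"
    using k i' p(2) by fastforce
  then show ?thesis
  proof cases
    case 1
    then have "Ls' ! k = Ls ! k" using Ls' by simp
    moreover obtain u1 v1 where "Ls ! k = u1 @ p # v1"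
      using k calculation by (metis split_list)
    ultimately show ?thesis
      using prefix_sum_at[OF dist(1) k(1)] prefix_sum_at[OF dist(2), of k] k(1) Ls' by simp
  next
    case 2
    then obtain u1 u2 where "u = u1 @ p # u2" by (metis split_list)
    then show ?thesis
      using prefix_sum_at[OF dist(1) i(1), of u1] prefix_sum_at[OF dist(2) i'(1), of u1] i(2) i'(2)
      by simp
  next
    case 3
    then obtain v1 v2 where "v = v1 @ p # v2" by (metis split_list)
    then show ?thesis
      using prefix_sum_at[OF dist(1) i(1), of "u @ w @ v1"] prefix_sum_at[OF dist(2) i'(1), of "u @ w' @ v1"]
        i(2) i'(2) sum by simp
  qed
qed

lemma concat_update:
  assumes "i < length Ls"
  shows "concat (Ls[i := x]) = concat (take i Ls) @ x @ concat (drop (Suc i) Ls)"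
    and "concat Ls = concat (take i Ls) @ Ls ! i @ concat (drop (Suc i) Ls)"
  using upd_conv_take_nth_drop[OF assms] id_take_nth_drop[OF assms]
  by (simp, metis concat.simps(2) concat_append)

lemma distinct_concat_update:
  assumes "distinct (concat Ls)" "i < length Ls" "distinct x" "set x \<subseteq> set (Ls ! i)"
  shows "distinct (concat (Ls[i := x]))"
  using assms unfolding concat_update[OF assms(2)] by (auto simp: distinct_append)

definition swap_shift :: "('a \<Rightarrow> int) \<Rightarrow> 'a \<Rightarrow> 'a \<Rightarrow> 'a \<Rightarrow> int" where
  "swap_shift f a b p = (if p = a then f b else if p = b then - f a else 0)"

lemma swap_adj_notin: "a \<notin> set l \<Longrightarrow> swap_adj a b l = l"
  by (induction a b l rule: swap_adj.induct) auto

lemma swap_adj_at: "a \<notin> set u \<Longrightarrow> swap_adj a b (u @ a # b # v) = u @ b # a # v"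
proof (induction u)
  case (Cons x u)
  then show ?case by (cases u) auto
qed simp

lemma swap_adj_keeps_adjacent:
  assumes "q \<notin> {a, b}" "r \<notin> {a, b}"
  shows "\<exists>u' v'. swap_adj a b (u @ [q, r] @ v) = u' @ [q, r] @ v'"
proof (induction u)
  case Nil
  with assms show ?case by (cases v) (auto intro: exI[of _ "[]"])
next
  case (Cons x u)
  then obtain u' v' where IH: "swap_adj a b (u @ [q, r] @ v) = u' @ [q, r] @ v'" by blast
  show ?case
  proof (cases "x = a \<and> u \<noteq> [] \<and> hd u = b")
    case True
    then obtain u2 where "u = b # u2" by (cases u) auto
    with True have "swap_adj a b ((x # u) @ [q, r] @ v) = ([b, a] @ u2) @ [q, r] @ v" by simp
    then show ?thesis by blast
  next
    case False
    obtain y zs where "u @ [q, r] @ v = y # zs" by (cases u) auto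
    moreover have "\<not> (x = a \<and> y = b)"
      using False assms calculation by (cases u) auto
    ultimately have "swap_adj a b ((x # u) @ [q, r] @ v) = (x # u') @ [q, r] @ v'"
      using IH by auto
    then show ?thesis by blast
  qed
qed

lemma adjacent_in_swap_adj:
  "adjacent_in Ls q r \<Longrightarrow> q \<notin> {a, b} \<Longrightarrow> r \<notin> {a, b} \<Longrightarrow>
    adjacent_in (map (swap_adj a b) Ls) q r"
  unfolding adjacent_in_def by (metis length_map nth_map swap_adj_keeps_adjacent)

lemma adjacent_in_filter:
  "adjacent_in Ls q r \<Longrightarrow> P q \<Longrightarrow> P r \<Longrightarrow> adjacent_in (map (filter P) Ls) q r"
  unfolding adjacent_in_def by (fastforce intro: exI[of _ "filter P u" for u])

lemma map_swap_adj_eq_update: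
  assumes "distinct (concat Ls)" "i < length Ls" "Ls ! i = u @ [a, b] @ v"
  shows "map (swap_adj a b) Ls = Ls[i := u @ [b, a] @ v]"
proof (rule nth_equalityI)
  fix k assume "k < length (map (swap_adj a b) Ls)"
  moreover have "k \<noteq> i \<Longrightarrow> a \<notin> set (Ls ! k)"
    using distinct_concat_nth_unique[OF assms(1,2), of k a] calculation assms(3) by auto
  ultimately show "map (swap_adj a b) Ls ! k = Ls[i := u @ [b, a] @ v] ! k"
    using assms distinct_concat_nth[OF assms(1,2)]
    by (cases "k = i") (auto simp: swap_adj_at swap_adj_notin)
qed simp

lemma map_filter_eq_update:
  assumes "distinct (concat Ls)" "i < length Ls" "Ls ! i = u @ [a, b] @ v"
  shows "map (filter (\<lambda>q. q \<notin> {a, b})) Ls = Ls[i := u @ v]"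
proof (rule nth_equalityI)
  fix k assume k: "k < length (map (filter (\<lambda>q. q \<notin> {a, b})) Ls)"
  show "map (filter (\<lambda>q. q \<notin> {a, b})) Ls ! k = Ls[i := u @ v] ! k"
  proof (cases "k = i")
    case True
    have "filter (\<lambda>q. q \<notin> {a, b}) u = u" "filter (\<lambda>q. q \<notin> {a, b}) v = v"
      using distinct_concat_nth[OF assms(1,2)] assms(3) by (auto simp: filter_id_conv)
    then show ?thesis using True assms by simp
  next
    case False
    then have "filter (\<lambda>q. q \<notin> {a, b}) (Ls ! k) = Ls ! k"
      using distinct_concat_nth_unique[OF assms(1,2), of k] k assms(3) by (auto simp: filter_id_conv)
    then show ?thesis using False k by simp
  qed
qed simp

lemma swap_adjacent:
  assumes dist: "distinct (concat Ls)" and adj: "adjacent_in Ls a b"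
  defines "Ls' \<equiv> map (swap_adj a b) Ls"
  shows "distinct (concat Ls')" "set (concat Ls') = set (concat Ls)"
    and "p \<in> set (concat Ls) \<Longrightarrow>
      comp_index Ls' p = comp_index Ls p \<and> prefix_sum f Ls' p = prefix_sum f Ls p + swap_shift f a b p"
proof -
  obtain i u v where i: "i < length Ls" "Ls ! i = u @ [a, b] @ v"
    using adj unfolding adjacent_in_def by blast
  have Ls': "Ls' = Ls[i := u @ [b, a] @ v]"
    unfolding Ls'_def using map_swap_adj_eq_update[OF dist i] .
  have i': "i < length Ls'" "Ls' ! i = u @ [b, a] @ v" using i Ls' by simp_all
  have set_i: "set (u @ [b, a] @ v) = set (Ls ! i)" using i(2) by auto
  have di: "distinct (u @ [b, a] @ v)" using distinct_concat_nth[OF dist i(1)] i(2) by auto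
  show dist': "distinct (concat Ls')"
    unfolding Ls' using distinct_concat_update[OF dist i(1) di equalityD1[OF set_i]] .
  show set_eq: "set (concat Ls') = set (concat Ls)"
    unfolding Ls' concat_update[OF i(1)] using set_i by (metis set_append)
  assume p: "p \<in> set (concat Ls)"
  consider "p = a" | "p = b" | "p \<notin> {a, b}" by blast
  then show "comp_index Ls' p = comp_index Ls p \<and>
      prefix_sum f Ls' p = prefix_sum f Ls p + swap_shift f a b p"
  proof cases
    case 1
    then show ?thesis
      using prefix_sum_at[OF dist i(1), of u] prefix_sum_at[OF dist' i'(1), of "u @ [b]"] i(2) i'(2) di
      by (simp add: swap_shift_def)
  next
    case 2
    then show ?thesis
      using prefix_sum_at[OF dist i(1), of "u @ [a]"] prefix_sum_at[OF dist' i'(1), of u] i(2) i'(2) di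
      by (simp add: swap_shift_def)
  next
    case 3
    have "p \<in> set (concat Ls')" using p set_eq by blast
    with 3 show ?thesis
      using prefix_sum_replace_block[OF dist dist' i Ls', of f] by (simp add: swap_shift_def)
  qed
qed

definition swap_pairs :: "('a \<times> 'a) list \<Rightarrow> 'a list list \<Rightarrow> 'a list list" where
  "swap_pairs ps Ls = fold (\<lambda>(a, b). map (swap_adj a b)) ps Ls"

lemma swap_pairs_simps [simp]:
  "swap_pairs [] Ls = Ls"
  "swap_pairs ((a, b) # ps) Ls = swap_pairs ps (map (swap_adj a b) Ls)"
  by (simp_all add: swap_pairs_def)

lemma swap_adjacent_pairs:
  assumes "distinct (concat Ls)" "\<forall>(a, b) \<in> set ps. adjacent_in Ls a b"
    and "distinct (concat (map (\<lambda>(a, b). [a, b]) ps))"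
  shows "distinct (concat (swap_pairs ps Ls)) \<and> set (concat (swap_pairs ps Ls)) = set (concat Ls) \<and>
    (\<forall>p \<in> set (concat Ls). comp_index (swap_pairs ps Ls) p = comp_index Ls p \<and>
       prefix_sum f (swap_pairs ps Ls) p = prefix_sum f Ls p + (\<Sum>(a, b) \<leftarrow> ps. swap_shift f a b p))"
  using assms
proof (induction ps arbitrary: Ls)
  case (Cons ab ps)
  obtain a b where ab: "ab = (a, b)" by force
  have adj: "adjacent_in Ls a b" using Cons.prems(2) ab by simp
  note swap = swap_adjacent[OF Cons.prems(1) adj]
  have adj_rest: "\<forall>(q, r) \<in> set ps. adjacent_in (map (swap_adj a b) Ls) q r"
    using Cons.prems(2,3) ab by (auto intro!: adjacent_in_swap_adj)
  have dist_rest: "distinct (concat (map (\<lambda>(a, b). [a, b]) ps))" using Cons.prems(3) by simp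
  note IH = Cons.IH[OF swap(1) adj_rest dist_rest, unfolded swap(2)]
  show ?case using IH swap(3)[of _ f] ab by (simp del: set_concat)
qed simp

lemma delete_adjacent:
  assumes dist: "distinct (concat Ls)" and adj: "adjacent_in Ls a b" and zero: "f a + f b = 0"
    and p: "p \<in> set (concat (map (filter (\<lambda>q. q \<notin> {a, b})) Ls))"
  shows "comp_index (map (filter (\<lambda>q. q \<notin> {a, b})) Ls) p = comp_index Ls p \<and>
    prefix_sum f (map (filter (\<lambda>q. q \<notin> {a, b})) Ls) p = prefix_sum f Ls p"
proof -
  obtain i u v where i: "i < length Ls" "Ls ! i = u @ [a, b] @ v"
    using adj unfolding adjacent_in_def by blast
  have "distinct (concat (map (filter (\<lambda>q. q \<notin> {a, b})) Ls))"
    using dist by (simp add: filter_concat[symmetric])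
  moreover have "map (filter (\<lambda>q. q \<notin> {a, b})) Ls = Ls[i := u @ [] @ v]"
    using map_filter_eq_update[OF dist i] by simp
  ultimately show ?thesis using prefix_sum_replace_block[OF dist _ i, of _ "[]" f p] p zero by simp
qed

section \<open>Crossing weights of a Gauss code\<close>

definition gauss_code :: "('c \<times> bool) list list \<Rightarrow> bool" where
  "gauss_code Ls \<longleftrightarrow>
     distinct (concat Ls) \<and> (\<forall>(c, b) \<in> set (concat Ls). (c, \<not> b) \<in> set (concat Ls))"

lemma gauss_code_distinct: "gauss_code Ls \<Longrightarrow> distinct (concat Ls)"
  unfolding gauss_code_def by blast

lemma wf_gd_gauss_code:
  assumes "wf_gd D"
  shows "gauss_code (comps D)"
proof -
  let ?xs = "concat (comps D)"
  have count: "count_list ?xs (c, b) = 1" if "c \<in> crossings D" for c b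
    using assms that unfolding wf_gd_def by (cases b) auto
  have crossing: "c \<in> crossings D" if "(c, b) \<in> set ?xs" for c b
    using that unfolding crossings_def by force
  then have "count (mset ?xs) p = (if p \<in> set ?xs then 1 else 0)" for p
    using count by (cases p) (auto simp: count_mset)
  moreover have "(c, \<not> b) \<in> set ?xs" if "(c, b) \<in> set ?xs" for c b
    using count[OF crossing[OF that], of "\<not> b"] by (metis count_list_0_iff zero_neq_one)
  ultimately show ?thesis
    unfolding gauss_code_def distinct_count_atmost_1 by blast
qed

lemma gauss_code_passage:
  assumes "gauss_code (comps D)" "c \<in> crossings D"
  shows "(c, b) \<in> set (concat (comps D))"
proof -
  obtain b' where b': "(c, b') \<in> set (concat (comps D))"
    using assms(2) unfolding crossings_def by force
  moreover have "(c, \<not> b') \<in> set (concat (comps D))"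
    using assms(1) b' unfolding gauss_code_def by blast
  ultimately show ?thesis by (cases "b' = b") auto
qed

lemma comps_delete_crossings [simp]:
  "comps (delete_crossings S D) = map (filter (\<lambda>q. fst q \<notin> S)) (comps D)"
  and sg_delete_crossings [simp]: "sg (delete_crossings S D) = sg D"
  by (simp_all add: delete_crossings_def)

lemma crossings_delete_crossings: "crossings (delete_crossings S D) = crossings D - S"
  unfolding crossings_def by (auto simp: filter_concat[symmetric] simp del: set_concat)

lemma gauss_code_delete_crossings:
  "gauss_code (comps D) \<Longrightarrow> gauss_code (comps (delete_crossings S D))"
  unfolding gauss_code_def by (auto simp: filter_concat[symmetric] simp del: set_concat)

lemma ichg_cong: "sg D' = sg D \<Longrightarrow> ichg D' = ichg D"
  by (simp add: ichg_def fun_eq_iff)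

lemma ichg_over_under: "ichg D (c, b) + ichg D (c, \<not> b) = 0"
  unfolding ichg_def by simp

lemma adjacent_eq_adjacent_in: "adjacent D = adjacent_in (comps D)"
  unfolding adjacent_def adjacent_in_def by (simp add: fun_eq_iff)

definition start_sum :: "nat \<Rightarrow> (nat \<times> nat) aff" where
  "start_sum i = avar (i, 1) + avar (i, 2)"

lemma cweight_eq_kweight: "cweight D c = kweight D start_sum c"
proof -
  have split: "(\<lambda>p. (if is_self D (fst p) then ichg D p else 0) + (if is_self D (fst p) then 0 else ichg D p))
      = ichg D" by auto
  have "babs (bilabel D i j) = klabel D start_sum i j" for i j
    using sum_list_addf[of "\<lambda>p. if is_self D (fst p) then ichg D p else 0"
        "\<lambda>p. if is_self D (fst p) then 0 else ichg D p" "take j (comps D ! i)"]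
    unfolding split by (simp add: babs_def bilabel_def klabel_def start_sum_def aconst_def algebra_simps)
  then show ?thesis unfolding cweight_def kweight_def by (simp add: case_prod_beta)
qed

definition weight_offset :: "('c \<times> bool \<Rightarrow> int) \<Rightarrow> ('c \<times> bool) list list \<Rightarrow> 'c \<Rightarrow> int" where
  "weight_offset f Ls c = prefix_sum f Ls (c, True) - prefix_sum f Ls (c, False) - f (c, False)"

lemma over_comp_eq: "over_comp D c = comp_index (comps D) (c, True)"
  unfolding over_comp_def comp_of_def comp_index_def pos_def position_def ..

lemma aconst_add: "aconst (a + b) = (aconst a + aconst b :: 'v aff)"
  and aconst_diff: "aconst (a - b) = (aconst a - aconst b :: 'v aff)"
  and aconst_zero: "aconst 0 = (0 :: 'v aff)"
  by (simp_all add: aconst_def zero_prod_def)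

lemma kweight_eq:
  assumes "(c, False) \<in> set (concat (comps D))"
  shows "kweight D st c = st (comp_index (comps D) (c, True)) - st (comp_index (comps D) (c, False))
           + aconst (weight_offset (ichg D) (comps D) c)"
proof -
  have pos: "pos D = position (comps D)"
    unfolding pos_def position_def by (simp add: fun_eq_iff)
  obtain i j where ij: "position (comps D) (c, True) = (i, j)" by force
  obtain i' j' where ij': "position (comps D) (c, False) = (i', j')" by force
  have "j' < length (comps D ! i')" "comps D ! i' ! j' = (c, False)"
    using position_spec[OF assms] ij' by (simp_all add: comp_index_def)
  then show ?thesis
    unfolding kweight_def weight_offset_def prefix_sum_def comp_index_def klabel_def pos ij ij'
    by (simp add: take_Suc_conv_app_nth aconst_add aconst_diff)
qed

definition crossing_mono :: "gd \<Rightarrow> nat \<Rightarrow> (nat \<times> nat) mono" where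
  "crossing_mono D c = mono (over_comp D c) (cweight D c)"

lemma crossing_mono_eq:
  assumes "(c, False) \<in> set (concat (comps D))"
  shows "crossing_mono D c = mono (comp_index (comps D) (c, True))
    (start_sum (comp_index (comps D) (c, True)) - start_sum (comp_index (comps D) (c, False))
      + aconst (weight_offset (ichg D) (comps D) c))"
  unfolding crossing_mono_def over_comp_eq cweight_eq_kweight kweight_eq[OF assms] ..

lemma crossing_mono_cong:
  assumes "sg D' = sg D"
    and "(c, False) \<in> set (concat (comps D))" "(c, False) \<in> set (concat (comps D'))"
    and "\<And>b. comp_index (comps D') (c, b) = comp_index (comps D) (c, b)"
    and "weight_offset (ichg D) (comps D') c = weight_offset (ichg D) (comps D) c"
  shows "crossing_mono D' c = crossing_mono D c"
  unfolding crossing_mono_eq[OF assms(2)] crossing_mono_eq[OF assms(3)] ichg_cong[OF assms(1)] assms(4,5) ..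

definition crossing_coeff :: "int \<Rightarrow> 'm option \<Rightarrow> 'm option \<Rightarrow> int" where
  "crossing_coeff s M m = s * ((if m = M then 1 else 0) - (if m = None then 1 else 0))"

lemma mvaip_eq_sum: "mvaip D m = (\<Sum>c \<in> crossings D. crossing_coeff (sg D c) (crossing_mono D c) m)"
  unfolding mvaip_def crossing_coeff_def crossing_mono_def ..

lemma finite_crossings: "finite (crossings D)"
  unfolding crossings_def by simp

lemma mvaip_eqI:
  assumes "crossings D' \<subseteq> crossings D" "sg D' = sg D"
    and "\<And>c. c \<in> crossings D' \<Longrightarrow> crossing_mono D' c = crossing_mono D c"
    and "\<And>m. (\<Sum>c \<in> crossings D - crossings D'. crossing_coeff (sg D c) (crossing_mono D c) m) = 0"
  shows "mvaip D = mvaip D'"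
proof
  fix m
  have "mvaip D m = (\<Sum>c \<in> crossings D'. crossing_coeff (sg D c) (crossing_mono D c) m)"
    unfolding mvaip_eq_sum sum.subset_diff[OF assms(1) finite_crossings] assms(4) by simp
  also have "\<dots> = mvaip D' m"
    unfolding mvaip_eq_sum using assms(2,3) by simp
  finally show "mvaip D m = mvaip D' m" .
qed

section \<open>Invariance under Reidemeister moves\<close>

lemma crossing_mono_kink:
  assumes code: "gauss_code (comps D)" and adj: "adjacent_in (comps D) (c, b) (c, \<not> b)"
  shows "crossing_mono D c = None"
proof -
  note dist = gauss_code_distinct[OF code]
  have under: "(c, False) \<in> set (concat (comps D))"
    using adjacent_in_set[OF adj] by (cases b) simp_all
  show ?thesis
    using adjacent_in_prefix_sum[OF dist adj]
    by (cases b) (simp_all add: crossing_mono_eq[OF under] weight_offset_def ichg_def aconst_zero mono_def)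
qed

lemma crossing_mono_bigon:
  assumes code: "gauss_code (comps D)" and sg: "sg D c = - sg D d"
    and over: "adjacent_in (comps D) (c, True) (d, True)"
    and under: "adjacent_in (comps D) (c, False) (d, False) \<or> adjacent_in (comps D) (d, False) (c, False)"
  shows "crossing_mono D c = crossing_mono D d"
proof -
  note dist = gauss_code_distinct[OF code]
  have "(c, False) \<in> set (concat (comps D))" "(d, False) \<in> set (concat (comps D))"
    using under by (auto dest: adjacent_in_set)
  note eqs = crossing_mono_eq[OF this(1)] crossing_mono_eq[OF this(2)]
  note over_succ = adjacent_in_prefix_sum[OF dist over]
  from under show ?thesis
  proof
    assume "adjacent_in (comps D) (c, False) (d, False)"
    from adjacent_in_prefix_sum[OF dist this] show ?thesis
      using over_succ sg unfolding eqs by (simp add: weight_offset_def ichg_def algebra_simps)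
  next
    assume "adjacent_in (comps D) (d, False) (c, False)"
    from adjacent_in_prefix_sum[OF dist this] show ?thesis
      using over_succ sg unfolding eqs by (simp add: weight_offset_def ichg_def algebra_simps)
  qed
qed

lemma mvaip_delete_crossings:
  assumes code: "gauss_code (comps D)" and S: "S \<subseteq> crossings D"
    and kept: "\<And>p. p \<in> set (concat (comps (delete_crossings S D))) \<Longrightarrow>
      comp_index (comps (delete_crossings S D)) p = comp_index (comps D) p \<and>
      prefix_sum (ichg D) (comps (delete_crossings S D)) p = prefix_sum (ichg D) (comps D) p"
    and cancel: "\<And>m. (\<Sum>c \<in> S. crossing_coeff (sg D c) (crossing_mono D c) m) = 0"
  shows "mvaip D = mvaip (delete_crossings S D)"
proof (rule mvaip_eqI)
  let ?D' = "delete_crossings S D"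
  have cr: "crossings ?D' = crossings D - S" by (rule crossings_delete_crossings)
  show "crossings ?D' \<subseteq> crossings D" "sg ?D' = sg D" using cr by auto
  show "(\<Sum>c \<in> crossings D - crossings ?D'. crossing_coeff (sg D c) (crossing_mono D c) m) = 0" for m
    using cancel S cr by (simp add: double_diff)
  fix c assume c: "c \<in> crossings ?D'"
  have passage: "(c, b) \<in> set (concat (comps ?D'))" for b
    using gauss_code_passage[OF gauss_code_delete_crossings[OF code] c] .
  show "crossing_mono ?D' c = crossing_mono D c"
  proof (rule crossing_mono_cong)
    show "sg ?D' = sg D" by simp
    show "(c, False) \<in> set (concat (comps ?D'))" by (fact passage)
    show "(c, False) \<in> set (concat (comps D))" using gauss_code_passage[OF code] c cr by blast
    show "comp_index (comps ?D') (c, b) = comp_index (comps D) (c, b)" for b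
      using kept[OF passage] by blast
    show "weight_offset (ichg D) (comps ?D') c = weight_offset (ichg D) (comps D) c"
      using kept[OF passage] unfolding weight_offset_def by simp
  qed
qed

lemma mvaip_R1_remove:
  assumes "R1_remove D D'"
  shows "mvaip D = mvaip D'"
proof -
  obtain c b where wf: "wf_gd D" and adj: "adjacent_in (comps D) (c, b) (c, \<not> b)"
    and D': "D' = delete_crossings {c} D"
    using assms unfolding R1_remove_def adjacent_eq_adjacent_in by blast
  have code: "gauss_code (comps D)" using wf_gd_gauss_code[OF wf] .
  note dist = gauss_code_distinct[OF code]
  have "(\<lambda>q. fst q \<notin> {c}) = (\<lambda>q. q \<notin> {(c, b), (c, \<not> b)})" by (auto simp: fun_eq_iff)
  then have comps': "comps D' = map (filter (\<lambda>q. q \<notin> {(c, b), (c, \<not> b)})) (comps D)"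
    unfolding D' by simp
  show ?thesis
    unfolding D'
  proof (rule mvaip_delete_crossings[OF code])
    show "{c} \<subseteq> crossings D"
      using adjacent_in_set(1)[OF adj] unfolding crossings_def by force
    show "comp_index (comps (delete_crossings {c} D)) p = comp_index (comps D) p \<and>
        prefix_sum (ichg D) (comps (delete_crossings {c} D)) p = prefix_sum (ichg D) (comps D) p"
      if "p \<in> set (concat (comps (delete_crossings {c} D)))" for p
      using delete_adjacent[OF dist adj ichg_over_under] that unfolding comps'[unfolded D'] .
    show "(\<Sum>c \<in> {c}. crossing_coeff (sg D c) (crossing_mono D c) m) = 0" for m
      by (simp add: crossing_mono_kink[OF code adj] crossing_coeff_def)
  qed
qed

lemma mvaip_R2_remove:
  assumes "R2_remove D D'"
  shows "mvaip D = mvaip D'"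
proof -
  obtain c d where wf: "wf_gd D" and "c \<noteq> d" and sg: "sg D c = - sg D d"
    and over: "adjacent_in (comps D) (c, True) (d, True)"
    and under: "adjacent_in (comps D) (c, False) (d, False) \<or> adjacent_in (comps D) (d, False) (c, False)"
    and D': "D' = delete_crossings {c, d} D"
    using assms unfolding R2_remove_def adjacent_eq_adjacent_in by blast
  obtain p q where pq: "{p, q} = {(c, False), (d, False)}" and adj: "adjacent_in (comps D) p q"
    using under by blast
  have code: "gauss_code (comps D)" using wf_gd_gauss_code[OF wf] .
  note dist = gauss_code_distinct[OF code]
  define Ls1 where "Ls1 = map (filter (\<lambda>r. r \<notin> {(c, True), (d, True)})) (comps D)"
  have dist1: "distinct (concat Ls1)"
    unfolding Ls1_def using dist by (simp add: filter_concat[symmetric])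
  have adj1: "adjacent_in Ls1 p q"
    unfolding Ls1_def using pq by (intro adjacent_in_filter[OF adj]) auto
  have zero_over: "ichg D (c, True) + ichg D (d, True) = 0" using sg by (simp add: ichg_def)
  have zero_under: "ichg D p + ichg D q = 0"
    using pq sg \<open>c \<noteq> d\<close> by (auto simp: ichg_def doubleton_eq_iff)
  have "(\<lambda>r. fst r \<notin> {c, d}) = (\<lambda>r. r \<notin> {(c, True), (d, True)} \<and> r \<notin> {p, q})"
    using pq by (auto simp: fun_eq_iff)
  then have comps': "comps (delete_crossings {c, d} D) = map (filter (\<lambda>r. r \<notin> {p, q})) Ls1"
    unfolding Ls1_def by simp
  show ?thesis
    unfolding D'
  proof (rule mvaip_delete_crossings[OF code])
    show "{c, d} \<subseteq> crossings D"
      using adjacent_in_set[OF over] unfolding crossings_def by force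
    show "comp_index (comps (delete_crossings {c, d} D)) r = comp_index (comps D) r \<and>
        prefix_sum (ichg D) (comps (delete_crossings {c, d} D)) r = prefix_sum (ichg D) (comps D) r"
      if "r \<in> set (concat (comps (delete_crossings {c, d} D)))" for r
    proof -
      have "r \<in> set (concat Ls1)" using that unfolding comps' by auto
      then show ?thesis
        using delete_adjacent[OF dist1 adj1 zero_under] delete_adjacent[OF dist over zero_over]
          that unfolding comps' Ls1_def by simp
    qed
    show "(\<Sum>c \<in> {c, d}. crossing_coeff (sg D c) (crossing_mono D c) m) = 0" for m
      using \<open>c \<noteq> d\<close> sg crossing_mono_bigon[OF code sg over under] by (simp add: crossing_coeff_def)
  qed
qed

lemma R3_swap_shifts_balance:
  fixes sg :: "'c \<Rightarrow> int"
  assumes "distinct [x, y, z]" "s \<in> {1, -1}"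
    and "(if C1 then 1 else -1) = s * sg z" "(if C2 then 1 else -1) = - s * sg y"
    and "(if C3 then 1 else -1) = s * sg x"
  defines "f \<equiv> \<lambda>p :: 'c \<times> bool. if snd p then - sg (fst p) else sg (fst p)"
    and "ps \<equiv> [if C1 then ((x, True), (y, True)) else ((y, True), (x, True)),
               if C2 then ((z, True), (x, False)) else ((x, False), (z, True)),
               if C3 then ((y, False), (z, False)) else ((z, False), (y, False))]"
  shows "(\<Sum>(a, b) \<leftarrow> ps. swap_shift f a b (c, True)) = (\<Sum>(a, b) \<leftarrow> ps. swap_shift f a b (c, False))"
proof -
  have "sg z = (if C1 then s else - s)" "sg y = (if C2 then - s else s)" "sg x = (if C3 then s else - s)"
    using assms(2-5) by auto
  then show ?thesis
    using assms(1) unfolding ps_def f_def swap_shift_def by (cases C1; cases C2; cases C3) auto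
qed

lemma R3_swap_pairs:
  assumes "R3 D D'"
  obtains ps where "wf_gd D" "sg D' = sg D" "comps D' = swap_pairs ps (comps D)"
    "\<forall>(a, b) \<in> set ps. adjacent_in (comps D) a b" "distinct (concat (map (\<lambda>(a, b). [a, b]) ps))"
    "\<And>c. (\<Sum>(a, b) \<leftarrow> ps. swap_shift (ichg D) a b (c, True))
       = (\<Sum>(a, b) \<leftarrow> ps. swap_shift (ichg D) a b (c, False))"
proof -
  obtain x y z s where wf: "wf_gd D" and xyz: "distinct [x, y, z]"
    and adj1: "adjacent D (x, True) (y, True) \<or> adjacent D (y, True) (x, True)"
    and adj2: "adjacent D (z, True) (x, False) \<or> adjacent D (x, False) (z, True)"
    and adj3: "adjacent D (y, False) (z, False) \<or> adjacent D (z, False) (y, False)"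
    and s: "s \<in> {1, -1::int}"
    and ord: "ord_sign D (x, True) (y, True) = s * sg D z"
      "ord_sign D (z, True) (x, False) = - s * sg D y"
      "ord_sign D (y, False) (z, False) = s * sg D x"
    and D': "D' = D\<lparr>comps := map (\<lambda>l.
               let l1 = (if adjacent D (x, True) (y, True) then swap_adj (x, True) (y, True) l
                         else swap_adj (y, True) (x, True) l);
                   l2 = (if adjacent D (z, True) (x, False) then swap_adj (z, True) (x, False) l1
                         else swap_adj (x, False) (z, True) l1)
               in (if adjacent D (y, False) (z, False) then swap_adj (y, False) (z, False) l2
                   else swap_adj (z, False) (y, False) l2)) (comps D)\<rparr>"
    using assms unfolding R3_def by blast
  define C1 where "C1 = adjacent D (x, True) (y, True)"
  define C2 where "C2 = adjacent D (z, True) (x, False)"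
  define C3 where "C3 = adjacent D (y, False) (z, False)"
  define ps where "ps = [if C1 then ((x, True), (y, True)) else ((y, True), (x, True)),
               if C2 then ((z, True), (x, False)) else ((x, False), (z, True)),
               if C3 then ((y, False), (z, False)) else ((z, False), (y, False))]"
  show ?thesis
  proof (rule that[of ps])
    show "wf_gd D" by (fact wf)
    show "sg D' = sg D" unfolding D' by simp
    show "comps D' = swap_pairs ps (comps D)"
      unfolding D' ps_def C1_def[symmetric] C2_def[symmetric] C3_def[symmetric]
      by (cases C1; cases C2; cases C3) (simp_all add: Let_def swap_pairs_def)
    show "\<forall>(a, b) \<in> set ps. adjacent_in (comps D) a b"
      using adj1 adj2 adj3 unfolding ps_def C1_def C2_def C3_def adjacent_eq_adjacent_in by auto
    show "distinct (concat (map (\<lambda>(a, b). [a, b]) ps))"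
      using xyz unfolding ps_def by auto
    show "(\<Sum>(a, b) \<leftarrow> ps. swap_shift (ichg D) a b (c, True))
       = (\<Sum>(a, b) \<leftarrow> ps. swap_shift (ichg D) a b (c, False))" for c
      using R3_swap_shifts_balance[OF xyz s ord[unfolded ord_sign_def, folded C1_def C2_def C3_def]]
      unfolding ps_def ichg_def[abs_def] .
  qed
qed

lemma mvaip_R3:
  assumes "R3 D D'"
  shows "mvaip D = mvaip D'"
proof -
  obtain ps where wf: "wf_gd D" and sg': "sg D' = sg D" and comps': "comps D' = swap_pairs ps (comps D)"
    and adj: "\<forall>(a, b) \<in> set ps. adjacent_in (comps D) a b"
    and disjoint: "distinct (concat (map (\<lambda>(a, b). [a, b]) ps))"
    and balance: "\<And>c. (\<Sum>(a, b) \<leftarrow> ps. swap_shift (ichg D) a b (c, True))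
       = (\<Sum>(a, b) \<leftarrow> ps. swap_shift (ichg D) a b (c, False))"
    using R3_swap_pairs[OF assms] by blast
  have code: "gauss_code (comps D)" using wf_gd_gauss_code[OF wf] .
  note dist = gauss_code_distinct[OF code]
  note swapped = swap_adjacent_pairs[OF dist adj disjoint, of "ichg D", folded comps']
  have set': "set (concat (comps D')) = set (concat (comps D))" using swapped by blast
  have cr: "crossings D' = crossings D" unfolding crossings_def set' ..
  show ?thesis
  proof (rule mvaip_eqI)
    show "crossings D' \<subseteq> crossings D" "sg D' = sg D" using cr sg' by auto
    show "(\<Sum>c \<in> crossings D - crossings D'. crossing_coeff (sg D c) (crossing_mono D c) m) = 0" for m
      using cr by simp
  next
    fix c assume "c \<in> crossings D'"
    then have passage: "(c, b) \<in> set (concat (comps D))" for b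
      using gauss_code_passage[OF code] cr by blast
    have kept: "comp_index (comps D') (c, b) = comp_index (comps D) (c, b) \<and>
      prefix_sum (ichg D) (comps D') (c, b)
        = prefix_sum (ichg D) (comps D) (c, b) + (\<Sum>(a, b') \<leftarrow> ps. swap_shift (ichg D) a b' (c, b))" for b
      using swapped passage by blast
    show "crossing_mono D' c = crossing_mono D c"
    proof (rule crossing_mono_cong[OF sg' passage])
      show "(c, False) \<in> set (concat (comps D'))" using passage set' by blast
      show "comp_index (comps D') (c, b) = comp_index (comps D) (c, b)" for b using kept by blast
      show "weight_offset (ichg D) (comps D') c = weight_offset (ichg D) (comps D) c"
        using kept balance[of c] unfolding weight_offset_def by simp
    qed
  qed
qed

lemma mvaip_reid_move:
  assumes "reid_move D D'"
  shows "mvaip D = mvaip D'"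
  using assms unfolding reid_move_def
  by (elim disjE) (metis mvaip_R1_remove mvaip_R2_remove mvaip_R3)+

section \<open>Specialization to Kauffman's polynomial\<close>

lemma sum_crossing_coeff:
  assumes "finite F"
  shows "(\<Sum>m \<in> F. crossing_coeff s M m) = s * ((if M \<in> F then 1 else 0) - (if None \<in> F then 1 else 0))"
  unfolding crossing_coeff_def sum_distrib_left[symmetric] sum_subtractf using assms by simp

lemma specialize_eq_sum:
  assumes "finite F" "\<And>m. m \<notin> F \<Longrightarrow> P m = 0"
  shows "specialize P e = (\<Sum>m \<in> {m \<in> F. mono_exp m = e}. P m)"
  unfolding specialize_def by (rule sum.mono_neutral_left) (use assms in auto)

lemma specialize_mvaip: "specialize (mvaip D) = kauffman_P D start_sum"
proof
  fix e
  let ?F = "{m \<in> insert None (crossing_mono D ` crossings D). mono_exp m = e}"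
  have "specialize (mvaip D) e = (\<Sum>m \<in> ?F. mvaip D m)"
    by (rule specialize_eq_sum)
      (auto simp: mvaip_eq_sum crossing_coeff_def finite_crossings intro!: sum.neutral)
  also have "\<dots> = (\<Sum>c \<in> crossings D. \<Sum>m \<in> ?F. crossing_coeff (sg D c) (crossing_mono D c) m)"
    unfolding mvaip_eq_sum by (rule sum.swap)
  also have "\<dots> = kauffman_P D start_sum e"
    unfolding kauffman_P_def
  proof (rule sum.cong[OF refl])
    fix c assume "c \<in> crossings D"
    then have "crossing_mono D c \<in> ?F \<longleftrightarrow> e = kweight D start_sum c" "None \<in> ?F \<longleftrightarrow> e = 0"
      by (auto simp: crossing_mono_def mono_exp_def mono_def cweight_eq_kweight)
    then show "(\<Sum>m \<in> ?F. crossing_coeff (sg D c) (crossing_mono D c) m)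
        = sg D c * ((if e = kweight D start_sum c then 1 else 0) - (if e = 0 then 1 else 0))"
      by (simp add: sum_crossing_coeff finite_crossings)
  qed
  finally show "specialize (mvaip D) e = kauffman_P D start_sum e" .
qed

lemma kauffman_P_knot:
  assumes "wf_gd D" "length (comps D) = 1"
  shows "kauffman_P D st = kauffman_P D st'"
proof -
  have code: "gauss_code (comps D)" using wf_gd_gauss_code[OF assms(1)] .
  have "kweight D st c = kweight D st' c" if "c \<in> crossings D" for c
  proof -
    have passage: "(c, b) \<in> set (concat (comps D))" for b using gauss_code_passage[OF code that] .
    then have "comp_index (comps D) (c, b) = 0" for b
      using position_spec(1) assms(2) by (metis less_one)
    then show ?thesis using kweight_eq[OF passage, of st] kweight_eq[OF passage, of st'] by simp
  qed
  then show ?thesis unfolding kauffman_P_def by (intro ext sum.cong) auto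
qed

theorem proposition4:
  shows "(\<forall>D D'. wf_gd D \<and> compatible D \<and> reid_move D D' \<longrightarrow> mvaip D = mvaip D') \<and>
         (\<forall>D. wf_gd D \<and> compatible D \<longrightarrow>
              specialize (mvaip D) = kauffman_P D (\<lambda>i. avar (i, 1) + avar (i, 2))) \<and>
         (\<forall>D (x :: (nat \<times> nat) aff). wf_gd D \<and> length (comps D) = 1 \<longrightarrow>
              specialize (mvaip D) = kauffman_P D (\<lambda>_. x))"
proof (intro conjI allI impI)
  show "mvaip D = mvaip D'" if "wf_gd D \<and> compatible D \<and> reid_move D D'" for D D'
    using that by (intro mvaip_reid_move) simp
  have specialize: "specialize (mvaip D) = kauffman_P D (\<lambda>i. avar (i, 1) + avar (i, 2))" for D
    using specialize_mvaip unfolding start_sum_def .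
  then show "specialize (mvaip D) = kauffman_P D (\<lambda>i. avar (i, 1) + avar (i, 2))" for D .
  show "specialize (mvaip D) = kauffman_P D (\<lambda>_. x)"
    if "wf_gd D \<and> length (comps D) = 1" for D and x :: "(nat \<times> nat) aff"
    using specialize[of D] kauffman_P_knot[of D "\<lambda>i. avar (i, 1) + avar (i, 2)" "\<lambda>_. x"] that
    by simp
qed

end
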